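(* For each $n$ let $\mathbf{v}=\mathbf{v}_n$, $\mathbf{w}=\mathbf{w}_n$, $\bar{\mathbf{v}}=\bar{\mathbf{v}}_n$ be random vectors in $\mathbb{R}^n$ with $\delta_n:=\min_{i\in[n]}|\bar v_i|>0$, and let $p=p_n\to\infty$. If $\min_{s=\pm1}\|s\mathbf{v}-\bar{\mathbf{v}}-\mathbf{w}\|_p=o_{\mathbb P}(n^{1/p}\delta_n;p)$, then $\limsup_{n\to\infty}p^{-1}\log\Big(\frac1n\mathbb{E}\min_{s=\pm1}|\{i\in[n]:s\,\mathrm{sgn}(v_i)\ne\mathrm{sgn}(\bar v_i)\}|\Big)\le\limsup_{\varepsilon\to0}\limsup_{n\to\infty}p^{-1}\log\Big(\frac1n\sum_{i=1}^n\mathbb{P}\big(-w_i\,\mathrm{sgn}(\bar v_i)\ge(1-\varepsilon)|\bar v_i|\big)\Big)$.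
   Context: $\mathrm{sgn}$ is the sign function; $\|\cdot\|_p$ is the vector $\ell_p$ norm; $\log0=-\infty$. For random $X_n,Y_n$ and deterministic $r_n>0$: $X_n=O_{\mathbb P}(Y_n;r_n)$ means there is a constant $C_1>0$ such that for every $C>0$ there exist $C'>0,N$ with $\mathbb{P}(|X_n|\ge C'|Y_n|)\le C_1e^{-Cr_n}$ for $n\ge N$; $X_n=o_{\mathbb P}(Y_n;r_n)$ means $X_n=O_{\mathbb P}(w_nY_n;r_n)$ for some deterministic $w_n\to0$. *)

theory Defs
  imports "HOL-Probability.Probability"
begin

text \<open>Vectors in R^n are represented as functions nat => real, only the
indices i < n (i.e. {..<n}) being relevant.\<close>

definition lp_norm :: "real \<Rightarrow> nat \<Rightarrow> (nat \<Rightarrow> real) \<Rightarrow> real" where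
  "lp_norm p n x = (\<Sum>i<n. \<bar>x i\<bar> powr p) powr (1 / p)"

definition eln :: "real \<Rightarrow> ereal" where
  "eln x = (if x \<le> 0 then -\<infinity> else ereal (ln x))"

definition bigO_P ::
  "(nat \<Rightarrow> 'a measure) \<Rightarrow> (nat \<Rightarrow> 'a \<Rightarrow> real) \<Rightarrow> (nat \<Rightarrow> 'a \<Rightarrow> real) \<Rightarrow> (nat \<Rightarrow> real) \<Rightarrow> bool" where
  "bigO_P M X Y r \<longleftrightarrow>
     (\<exists>C1>0. \<forall>C>0. \<exists>C'>0. \<exists>N. \<forall>n\<ge>N.
        measure (M n) {\<omega> \<in> space (M n). \<bar>X n \<omega>\<bar> \<ge> C' * \<bar>Y n \<omega>\<bar>} \<le> C1 * exp (- C * r n))"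

definition smallo_P ::
  "(nat \<Rightarrow> 'a measure) \<Rightarrow> (nat \<Rightarrow> 'a \<Rightarrow> real) \<Rightarrow> (nat \<Rightarrow> 'a \<Rightarrow> real) \<Rightarrow> (nat \<Rightarrow> real) \<Rightarrow> bool" where
  "smallo_P M X Y r \<longleftrightarrow>
     (\<exists>w::nat \<Rightarrow> real. w \<longlonglongrightarrow> 0 \<and> bigO_P M X (\<lambda>n \<omega>. w n * Y n \<omega>) r)"

definition sign_mismatch :: "nat \<Rightarrow> real \<Rightarrow> (nat \<Rightarrow> real) \<Rightarrow> (nat \<Rightarrow> real) \<Rightarrow> nat" where
  "sign_mismatch n s v vb = card {i \<in> {..<n}. s * sgn (v i) \<noteq> sgn (vb i)}"

end

theory Submission
  imports Defs
begin

(* Off an event of superexponentially small probability, the better-signed residual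
   min_s ||s v - vb - w||_p is below eta n^(1/p) delta. There a sign error at i comes either from
   the noise, -w_i sgn(vb_i) >= (1 - eps) |vb_i|, or from a residual entry of size at least
   eps delta, and by Markov's inequality in l_p the latter happens at most n (eta/eps)^p times.
   Taking expectations and choosing eta = eps e^z for z above the noise exponent bounds all three
   contributions to the mean mismatch rate by e^(z p). *)

definition min_sign_mismatch :: "nat \<Rightarrow> (nat \<Rightarrow> real) \<Rightarrow> (nat \<Rightarrow> real) \<Rightarrow> nat" where
  "min_sign_mismatch n v vb = min (sign_mismatch n 1 v vb) (sign_mismatch n (-1) v vb)"

definition sign_residual ::
    "real \<Rightarrow> nat \<Rightarrow> (nat \<Rightarrow> real) \<Rightarrow> (nat \<Rightarrow> real) \<Rightarrow> (nat \<Rightarrow> real) \<Rightarrow> real" where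
  "sign_residual p n v vb w =
     min (lp_norm p n (\<lambda>i. v i - vb i - w i)) (lp_norm p n (\<lambda>i. - v i - vb i - w i))"

definition exp_rate :: "(nat \<Rightarrow> real) \<Rightarrow> (nat \<Rightarrow> real) \<Rightarrow> ereal" where
  "exp_rate p a = limsup (\<lambda>n. ereal (1 / p n) * eln (a n))"

lemma lp_norm_powr:
  assumes "p > 0"
  shows "lp_norm p n x powr p = (\<Sum>i<n. \<bar>x i\<bar> powr p)"
  using assms unfolding lp_norm_def by (simp add: powr_powr sum_nonneg)

lemma lp_norm_nonneg: "lp_norm p n x \<ge> 0"
  unfolding lp_norm_def by simp

lemma card_ge_mult_powr_le_lp_norm_powr:
  fixes x :: "nat \<Rightarrow> real"
  assumes p: "p > 0" and a: "a \<ge> 0"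
  shows "real (card {i\<in>{..<n}. a \<le> \<bar>x i\<bar>}) * a powr p \<le> lp_norm p n x powr p"
proof -
  let ?U = "{i\<in>{..<n}. a \<le> \<bar>x i\<bar>}"
  have "real (card ?U) * a powr p = (\<Sum>i\<in>?U. a powr p)" by simp
  also have "\<dots> \<le> (\<Sum>i\<in>?U. \<bar>x i\<bar> powr p)" using a p by (intro sum_mono powr_mono2) auto
  also have "\<dots> \<le> (\<Sum>i<n. \<bar>x i\<bar> powr p)" by (intro sum_mono2) auto
  finally show ?thesis using p by (simp add: lp_norm_powr)
qed

lemma card_ge_le_of_lp_norm_le:
  fixes x :: "nat \<Rightarrow> real"
  assumes p: "p > 0" and a: "a > 0" and c: "c \<ge> 0"
    and norm: "lp_norm p n x \<le> c * (real n powr (1 / p) * a)"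
  shows "real (card {i\<in>{..<n}. a \<le> \<bar>x i\<bar>}) \<le> real n * c powr p"
proof -
  have "real (card {i\<in>{..<n}. a \<le> \<bar>x i\<bar>}) * a powr p \<le> lp_norm p n x powr p"
    using p a by (intro card_ge_mult_powr_le_lp_norm_powr) auto
  also have "\<dots> \<le> (c * (real n powr (1 / p) * a)) powr p"
    using p norm by (intro powr_mono2) (auto simp: lp_norm_def)
  also have "\<dots> = real n * c powr p * a powr p"
    using p a c by (simp add: powr_mult powr_powr)
  finally show ?thesis using a by simp
qed

text \<open>If the sign of \<open>s v\<close> is wrong, then \<open>s v - vb\<close> has modulus at least \<open>\<bar>vb\<bar>\<close>, and a
  fraction \<open>1 - \<epsilon>\<close> of it must be covered by the noise \<open>w\<close> unless the residual is at least
  \<open>\<epsilon> \<bar>vb\<bar>\<close>.\<close>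
lemma sign_error_imp_noise_or_residual:
  fixes v w vb s \<epsilon> :: real
  assumes "vb \<noteq> 0" "s = 1 \<or> s = -1" "s * sgn v \<noteq> sgn vb"
  shows "- w * sgn vb \<ge> (1 - \<epsilon>) * \<bar>vb\<bar> \<or> \<epsilon> * \<bar>vb\<bar> \<le> \<bar>s * v - vb - w\<bar>"
  using assms by (cases "vb > 0"; cases "v > 0"; cases "v < 0"; auto simp: sgn_if algebra_simps)

lemma sign_mismatch_le: "sign_mismatch n s v vb \<le> n"
  unfolding sign_mismatch_def by (rule order_trans[OF card_mono[OF finite_lessThan]]) auto

lemma sign_mismatch_le_noise_count:
  fixes v w vb :: "nat \<Rightarrow> real"
  assumes s: "s = 1 \<or> s = -1" and p: "p > 0" and \<epsilon>: "\<epsilon> > 0" and c: "c \<ge> 0"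
    and d: "d > 0" "\<And>i. i < n \<Longrightarrow> d \<le> \<bar>vb i\<bar>"
    and norm: "lp_norm p n (\<lambda>i. s * v i - vb i - w i) \<le> c * (real n powr (1 / p) * d)"
  shows "real (sign_mismatch n s v vb)
     \<le> real (card {i\<in>{..<n}. - w i * sgn (vb i) \<ge> (1 - \<epsilon>) * \<bar>vb i\<bar>}) + real n * (c / \<epsilon>) powr p"
proof -
  let ?A = "{i\<in>{..<n}. - w i * sgn (vb i) \<ge> (1 - \<epsilon>) * \<bar>vb i\<bar>}"
  let ?U = "{i\<in>{..<n}. \<epsilon> * d \<le> \<bar>s * v i - vb i - w i\<bar>}"
  have "{i\<in>{..<n}. s * sgn (v i) \<noteq> sgn (vb i)} \<subseteq> ?A \<union> ?U"
  proof
    fix i assume i: "i \<in> {i\<in>{..<n}. s * sgn (v i) \<noteq> sgn (vb i)}"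
    then have "vb i \<noteq> 0" using d by fastforce
    then have "- w i * sgn (vb i) \<ge> (1 - \<epsilon>) * \<bar>vb i\<bar> \<or> \<epsilon> * \<bar>vb i\<bar> \<le> \<bar>s * v i - vb i - w i\<bar>"
      using i by (intro sign_error_imp_noise_or_residual[OF _ s]) auto
    moreover have "\<epsilon> * d \<le> \<epsilon> * \<bar>vb i\<bar>" using d i \<epsilon> by auto
    ultimately show "i \<in> ?A \<union> ?U" using i by auto
  qed
  then have "sign_mismatch n s v vb \<le> card (?A \<union> ?U)"
    unfolding sign_mismatch_def by (intro card_mono) auto
  also have "\<dots> \<le> card ?A + card ?U" by (rule card_Un_le)
  finally have "real (sign_mismatch n s v vb) \<le> real (card ?A) + real (card ?U)" by simp
  moreover have "real (card ?U) \<le> real n * (c / \<epsilon>) powr p"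
    using p \<epsilon> c d norm by (intro card_ge_le_of_lp_norm_le) (auto simp: field_simps)
  ultimately show ?thesis by linarith
qed

lemma min_sign_mismatch_le_noise_count:
  fixes v w vb :: "nat \<Rightarrow> real"
  assumes p: "p > 0" and \<epsilon>: "\<epsilon> > 0" and c: "c \<ge> 0"
    and d: "d > 0" "\<And>i. i < n \<Longrightarrow> d \<le> \<bar>vb i\<bar>"
    and norm: "sign_residual p n v vb w \<le> c * (real n powr (1 / p) * d)"
  shows "real (min_sign_mismatch n v vb)
     \<le> real (card {i\<in>{..<n}. - w i * sgn (vb i) \<ge> (1 - \<epsilon>) * \<bar>vb i\<bar>}) + real n * (c / \<epsilon>) powr p"
proof -
  have "lp_norm p n (\<lambda>i. 1 * v i - vb i - w i) \<le> c * (real n powr (1 / p) * d) \<or>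
        lp_norm p n (\<lambda>i. -1 * v i - vb i - w i) \<le> c * (real n powr (1 / p) * d)"
    using norm by (simp add: sign_residual_def min_le_iff_disj)
  moreover have "real (sign_mismatch n s v vb)
      \<le> real (card {i\<in>{..<n}. - w i * sgn (vb i) \<ge> (1 - \<epsilon>) * \<bar>vb i\<bar>}) + real n * (c / \<epsilon>) powr p"
    if "s = 1 \<or> s = -1" "lp_norm p n (\<lambda>i. s * v i - vb i - w i) \<le> c * (real n powr (1 / p) * d)" for s
    by (rule sign_mismatch_le_noise_count[OF that(1) p \<epsilon> c d that(2)])
  ultimately show ?thesis
    by (fastforce simp: min_sign_mismatch_def of_nat_min)
qed

lemma borel_measurable_lp_norm[measurable]:
  assumes [measurable]: "\<And>i. (\<lambda>\<omega>. x \<omega> i) \<in> borel_measurable M"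
  shows "(\<lambda>\<omega>. lp_norm p n (x \<omega>)) \<in> borel_measurable M"
  unfolding lp_norm_def by measurable

lemma borel_measurable_sign_residual[measurable]:
  assumes [measurable]: "\<And>i. (\<lambda>\<omega>. v \<omega> i) \<in> borel_measurable M"
    "\<And>i. (\<lambda>\<omega>. vb \<omega> i) \<in> borel_measurable M" "\<And>i. (\<lambda>\<omega>. w \<omega> i) \<in> borel_measurable M"
  shows "(\<lambda>\<omega>. sign_residual p n (v \<omega>) (vb \<omega>) (w \<omega>)) \<in> borel_measurable M"
  unfolding sign_residual_def by measurable

lemma borel_measurable_sign_mismatch[measurable]:
  assumes [measurable]: "\<And>i. (\<lambda>\<omega>. v \<omega> i) \<in> borel_measurable M"
    "\<And>i. (\<lambda>\<omega>. vb \<omega> i) \<in> borel_measurable M"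
  shows "(\<lambda>\<omega>. real (sign_mismatch n s (v \<omega>) (vb \<omega>))) \<in> borel_measurable M"
proof -
  have "real (sign_mismatch n s (v \<omega>) (vb \<omega>))
      = (\<Sum>i<n. if s * sgn (v \<omega> i) \<noteq> sgn (vb \<omega> i) then 1 else 0)" for \<omega>
    unfolding sign_mismatch_def by (simp add: sum.If_cases Int_def)
  moreover have "(\<lambda>\<omega>. \<Sum>i<n. if s * sgn (v \<omega> i) \<noteq> sgn (vb \<omega> i) then 1 else 0 :: real)
      \<in> borel_measurable M"
    by measurable
  ultimately show ?thesis by simp
qed

lemma borel_measurable_min_sign_mismatch[measurable]:
  assumes [measurable]: "\<And>i. (\<lambda>\<omega>. v \<omega> i) \<in> borel_measurable M"
    "\<And>i. (\<lambda>\<omega>. vb \<omega> i) \<in> borel_measurable M"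
  shows "(\<lambda>\<omega>. real (min_sign_mismatch n (v \<omega>) (vb \<omega>))) \<in> borel_measurable M"
  unfolding min_sign_mismatch_def of_nat_min by measurable

lemma (in prob_space) expectation_le_sum_prob:
  fixes n :: nat
  assumes K: "K \<in> borel_measurable M" "\<And>\<omega>. \<omega> \<in> space M \<Longrightarrow> 0 \<le> K \<omega>"
      "\<And>\<omega>. \<omega> \<in> space M \<Longrightarrow> K \<omega> \<le> b"
    and sets: "\<And>i. A i \<in> events" "B \<in> events" and r: "r \<ge> 0"
    and bound: "\<And>\<omega>. \<omega> \<in> space M - B \<Longrightarrow> K \<omega> \<le> real (card {i\<in>{..<n}. \<omega> \<in> A i}) + r"
  shows "expectation K \<le> (\<Sum>i<n. prob (A i)) + r + b * prob B"
proof -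
  define f where "f = (\<lambda>\<omega>. (\<Sum>i<n. indicator (A i) \<omega>) + r + b * indicator B \<omega>)"
  have integrable_indicator: "integrable M (indicator E :: _ \<Rightarrow> real)" if "E \<in> events" for E
    using that by (simp add: emeasure_eq_measure)
  have "card {i\<in>{..<n}. \<omega> \<in> A i} = (\<Sum>i<n. indicator (A i) \<omega> :: real)" for \<omega>
    by (simp add: indicator_def sum_of_bool_eq Int_def)
  then have "K \<omega> \<le> f \<omega>" if "\<omega> \<in> space M" for \<omega>
    using that K bound[of \<omega>] r unfolding f_def by (cases "\<omega> \<in> B") (auto intro: sum_nonneg add_increasing)
  moreover have "integrable M K"
    using K by (intro integrable_const_bound[where B = b]) auto
  ultimately have "expectation K \<le> expectation f"
    using sets by (intro integral_mono) (auto simp: f_def integrable_indicator)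
  also have "expectation f = (\<Sum>i<n. prob (A i)) + r + b * prob B"
    using sets unfolding f_def by (simp add: integrable_indicator Bochner_Integration.integral_sum prob_space)
  finally show ?thesis .
qed

lemma expectation_min_sign_mismatch_le:
  fixes M :: "'a measure" and v w vb :: "'a \<Rightarrow> nat \<Rightarrow> real"
  assumes "prob_space M"
    and [measurable]: "\<And>i. (\<lambda>\<omega>. v \<omega> i) \<in> borel_measurable M"
      "\<And>i. (\<lambda>\<omega>. w \<omega> i) \<in> borel_measurable M" "\<And>i. (\<lambda>\<omega>. vb \<omega> i) \<in> borel_measurable M"
    and p: "p > 0" and \<epsilon>: "\<epsilon> > 0" and \<eta>: "\<eta> \<ge> 0"
  shows "(\<integral>\<omega>. real (min_sign_mismatch n (v \<omega>) (vb \<omega>)) \<partial>M)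
     \<le> (\<Sum>i<n. measure M {\<omega> \<in> space M. - w \<omega> i * sgn (vb \<omega> i) \<ge> (1 - \<epsilon>) * \<bar>vb \<omega> i\<bar>})
        + real n * (\<eta> / \<epsilon>) powr p
        + real n * measure M {\<omega> \<in> space M. \<bar>sign_residual p n (v \<omega>) (vb \<omega>) (w \<omega>)\<bar>
             \<ge> \<eta> * \<bar>real n powr (1 / p) * Min ((\<lambda>i. \<bar>vb \<omega> i\<bar>) ` {..<n})\<bar>}"
    (is "integral\<^sup>L M ?K \<le> (\<Sum>i<n. measure M (?A i)) + ?r + real n * measure M ?B")
proof -
  interpret prob_space M by fact
  have K_le: "?K \<omega> \<le> real n" for \<omega>
    using sign_mismatch_le[of n 1] by (simp add: min_sign_mismatch_def min.coboundedI1)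
  have bound: "?K \<omega> \<le> real (card {i\<in>{..<n}. \<omega> \<in> ?A i}) + ?r" if \<omega>: "\<omega> \<in> space M - ?B" for \<omega>
  proof -
    define d where "d = Min ((\<lambda>i. \<bar>vb \<omega> i\<bar>) ` {..<n})"
    let ?X = "sign_residual p n (v \<omega>) (vb \<omega>) (w \<omega>)"
    have "\<not> \<eta> * \<bar>real n powr (1 / p) * d\<bar> \<le> \<bar>?X\<bar>"
      using \<omega> unfolding d_def by blast
    then have X_less: "\<bar>?X\<bar> < \<eta> * \<bar>real n powr (1 / p) * d\<bar>"
      by simp
    \<comment> \<open>the strict inequality forces \<open>d > 0\<close>, so no positivity hypothesis on \<open>vb\<close> is needed\<close>
    then have "n \<noteq> 0" "d \<noteq> 0"
      by (cases "n = 0"; auto)+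
    moreover have "d \<ge> 0" if "n \<noteq> 0"
      using that unfolding d_def by (subst Min_ge_iff) auto
    ultimately have d: "d > 0" "\<And>i. i < n \<Longrightarrow> d \<le> \<bar>vb \<omega> i\<bar>"
      by (auto simp: d_def)
    from X_less d(1) have "?X \<le> \<eta> * (real n powr (1 / p) * d)"
      by (simp add: sign_residual_def lp_norm_nonneg abs_mult)
    with p \<epsilon> \<eta> d have "?K \<omega> \<le> real (card {i\<in>{..<n}. - w \<omega> i * sgn (vb \<omega> i) \<ge> (1 - \<epsilon>) * \<bar>vb \<omega> i\<bar>}) + ?r"
      by (rule min_sign_mismatch_le_noise_count)
    also have "{i\<in>{..<n}. - w \<omega> i * sgn (vb \<omega> i) \<ge> (1 - \<epsilon>) * \<bar>vb \<omega> i\<bar>} = {i\<in>{..<n}. \<omega> \<in> ?A i}"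
      using \<omega> by blast
    finally show ?thesis .
  qed
  have "?K \<in> borel_measurable M" "?A i \<in> events" "?B \<in> events" for i
    by measurable
  then show ?thesis
    using K_le bound by (intro expectation_le_sum_prob[where b = "real n"]) simp_all
qed

lemma bigO_P_eventually_measure_le_exp:
  fixes M :: "nat \<Rightarrow> 'a measure" and X Y :: "nat \<Rightarrow> 'a \<Rightarrow> real" and p :: "nat \<Rightarrow> real"
  assumes p: "filterlim p at_top sequentially" and big: "bigO_P M X Y p"
  obtains C' where "C' > 0"
    "eventually (\<lambda>n. measure (M n) {\<omega> \<in> space (M n). \<bar>X n \<omega>\<bar> \<ge> C' * \<bar>Y n \<omega>\<bar>} \<le> exp (z * p n))
       sequentially"
proof -
  obtain C1 where C1: "C1 > 0" and tail: "\<And>C. C > 0 \<Longrightarrow> \<exists>C'>0. \<exists>N. \<forall>n\<ge>N.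
      measure (M n) {\<omega> \<in> space (M n). \<bar>X n \<omega>\<bar> \<ge> C' * \<bar>Y n \<omega>\<bar>} \<le> C1 * exp (- C * p n)"
    using big unfolding bigO_P_def by blast
  define C where "C = \<bar>z\<bar> + \<bar>ln C1\<bar> + 1"
  have "C > 0"
    unfolding C_def by simp
  then obtain C' N where C': "C' > 0" and N: "\<And>n. n \<ge> N \<Longrightarrow>
      measure (M n) {\<omega> \<in> space (M n). \<bar>X n \<omega>\<bar> \<ge> C' * \<bar>Y n \<omega>\<bar>} \<le> C1 * exp (- C * p n)"
    using tail by blast
  have exp_bound: "C1 * exp (- C * p n) \<le> exp (z * p n)" if "p n \<ge> 1" for n
  proof -
    have "(\<bar>ln C1\<bar> + 1) * 1 \<le> (z + C) * p n"
      using that by (intro mult_mono) (auto simp: C_def)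
    then have "ln C1 - C * p n \<le> z * p n"
      by (simp add: algebra_simps)
    moreover have "C1 * exp (- C * p n) = exp (ln C1 - C * p n)"
      using C1 by (simp add: exp_diff exp_minus field_simps)
    ultimately show ?thesis
      by simp
  qed
  have "eventually (\<lambda>n. p n \<ge> 1 \<and> n \<ge> N) sequentially"
    using p by (simp add: filterlim_at_top eventually_conj eventually_ge_at_top)
  then have "eventually (\<lambda>n. measure (M n) {\<omega> \<in> space (M n). \<bar>X n \<omega>\<bar> \<ge> C' * \<bar>Y n \<omega>\<bar>}
      \<le> exp (z * p n)) sequentially"
  proof eventually_elim
    case (elim n)
    then show ?case
      using N[of n] exp_bound[of n] by linarith
  qed
  with C' show ?thesis
    by (rule that)
qed

lemma smallo_P_eventually_measure_le_exp:
  fixes M :: "nat \<Rightarrow> 'a measure" and X Y :: "nat \<Rightarrow> 'a \<Rightarrow> real" and p :: "nat \<Rightarrow> real"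
  assumes prob: "\<And>n. prob_space (M n)"
    and [measurable]: "\<And>n. X n \<in> borel_measurable (M n)" "\<And>n. Y n \<in> borel_measurable (M n)"
    and p: "filterlim p at_top sequentially" and small: "smallo_P M X Y p" and \<eta>: "\<eta> > 0"
  shows "eventually (\<lambda>n. measure (M n) {\<omega> \<in> space (M n). \<bar>X n \<omega>\<bar> \<ge> \<eta> * \<bar>Y n \<omega>\<bar>} \<le> exp (z * p n))
           sequentially"
proof -
  obtain u where u: "u \<longlonglongrightarrow> 0" and big: "bigO_P M X (\<lambda>n \<omega>. u n * Y n \<omega>) p"
    using small unfolding smallo_P_def by blast
  obtain C' where C': "C' > 0" and tail: "eventually (\<lambda>n. measure (M n)
      {\<omega> \<in> space (M n). \<bar>X n \<omega>\<bar> \<ge> C' * \<bar>u n * Y n \<omega>\<bar>} \<le> exp (z * p n)) sequentially"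
    using bigO_P_eventually_measure_le_exp[OF p big] by blast
  have "(\<lambda>n. C' * \<bar>u n\<bar>) \<longlonglongrightarrow> 0"
    using u by (intro tendsto_mult_right_zero tendsto_rabs_zero)
  then have "eventually (\<lambda>n. C' * \<bar>u n\<bar> < \<eta>) sequentially"
    using \<eta> by (rule order_tendstoD)
  with tail show ?thesis
  proof eventually_elim
    case (elim n)
    interpret prob_space "M n" by (rule prob)
    have "{\<omega> \<in> space (M n). \<bar>X n \<omega>\<bar> \<ge> \<eta> * \<bar>Y n \<omega>\<bar>}
        \<subseteq> {\<omega> \<in> space (M n). \<bar>X n \<omega>\<bar> \<ge> C' * \<bar>u n * Y n \<omega>\<bar>}"
    proof (intro Collect_mono impI conjI)
      fix \<omega> assume "\<omega> \<in> space (M n) \<and> \<bar>X n \<omega>\<bar> \<ge> \<eta> * \<bar>Y n \<omega>\<bar>"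
      moreover have "C' * \<bar>u n * Y n \<omega>\<bar> \<le> \<eta> * \<bar>Y n \<omega>\<bar>"
        using elim(2) by (simp add: abs_mult mult.assoc[symmetric] mult_right_mono)
      ultimately show "\<omega> \<in> space (M n)" "\<bar>X n \<omega>\<bar> \<ge> C' * \<bar>u n * Y n \<omega>\<bar>"
        by auto
    qed
    moreover have "{\<omega> \<in> space (M n). \<bar>X n \<omega>\<bar> \<ge> C' * \<bar>u n * Y n \<omega>\<bar>} \<in> events"
      by measurable
    ultimately have "measure (M n) {\<omega> \<in> space (M n). \<bar>X n \<omega>\<bar> \<ge> \<eta> * \<bar>Y n \<omega>\<bar>}
        \<le> measure (M n) {\<omega> \<in> space (M n). \<bar>X n \<omega>\<bar> \<ge> C' * \<bar>u n * Y n \<omega>\<bar>}"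
      by (rule finite_measure_mono)
    with elim(1) show ?case
      by linarith
  qed
qed

lemma scaled_eln_le:
  assumes p: "p > 0" and K: "K > 0" and a: "a \<le> K * exp (z * p)"
  shows "ereal (1 / p) * eln a \<le> ereal (ln K / p + z)"
proof (cases "a \<le> 0")
  case True
  then show ?thesis using p by (simp add: eln_def)
next
  case False
  then have "ln a \<le> ln (K * exp (z * p))"
    using a K by simp
  also have "\<dots> = ln K + z * p"
    using K by (simp add: ln_mult)
  finally have "ln a \<le> ln K + z * p" .
  then have "ln a / p \<le> ln K / p + z"
    using p by (simp add: field_simps)
  then show ?thesis using False p by (simp add: eln_def)
qed

lemma less_exp_of_scaled_eln_less:
  assumes p: "p > 0" and a: "ereal (1 / p) * eln a < ereal z"
  shows "a < exp (z * p)"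
proof (cases "a \<le> 0")
  case True
  then show ?thesis by (meson exp_gt_zero le_less_trans)
next
  case False
  then have "ln a < z * p"
    using a p by (simp add: eln_def field_simps)
  then show ?thesis
    using False by (metis exp_less_mono exp_ln not_le)
qed

lemma eventually_less_exp_of_exp_rate_less:
  assumes p: "filterlim p at_top sequentially" and rate: "exp_rate p a < ereal z"
  shows "eventually (\<lambda>n. a n < exp (z * p n)) sequentially"
proof -
  have "eventually (\<lambda>n. p n > 0) sequentially"
    using p by (simp add: filterlim_at_top_dense)
  with Limsup_lessD[OF rate[unfolded exp_rate_def]] show ?thesis
    by eventually_elim (rule less_exp_of_scaled_eln_less)
qed

lemma exp_rate_le:
  fixes g :: ereal
  assumes p: "filterlim p at_top sequentially" and K: "K > 0"
    and bound: "\<And>z. g < ereal z \<Longrightarrow> eventually (\<lambda>n. a n \<le> K * exp (z * p n)) sequentially"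
  shows "exp_rate p a \<le> g"
proof (rule ccontr)
  assume "\<not> ?thesis"
  then obtain z where z: "g < ereal z" "ereal z < exp_rate p a"
    using ereal_dense2[of g] by (auto simp: not_le)
  have "eventually (\<lambda>n. p n > 0) sequentially"
    using p by (simp add: filterlim_at_top_dense)
  with bound[OF z(1)]
  have "eventually (\<lambda>n. ereal (1 / p n) * eln (a n) \<le> ereal (ln K / p n + z)) sequentially"
    by eventually_elim (rule scaled_eln_le[OF _ K])
  then have "exp_rate p a \<le> limsup (\<lambda>n. ereal (ln K / p n + z))"
    unfolding exp_rate_def by (rule Limsup_mono)
  also have "\<dots> = ereal z"
  proof (rule lim_imp_Limsup)
    have "(\<lambda>n. ln K / p n + z) \<longlonglongrightarrow> 0 + z"
      using p by (intro tendsto_add tendsto_divide_0[OF tendsto_const] filterlim_at_top_imp_at_infinity) auto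
    then show "(\<lambda>n. ereal (ln K / p n + z)) \<longlonglongrightarrow> ereal z"
      by (simp add: tendsto_ereal)
  qed simp
  finally show False
    using z(2) by simp
qed

lemma eventually_mean_min_sign_mismatch_le_exp:
  fixes M :: "nat \<Rightarrow> 'a measure" and v w vb :: "nat \<Rightarrow> 'a \<Rightarrow> nat \<Rightarrow> real" and p :: "nat \<Rightarrow> real"
  assumes prob: "\<And>n. prob_space (M n)"
    and meas_v: "\<And>n i. (\<lambda>\<omega>. v n \<omega> i) \<in> borel_measurable (M n)"
    and meas_w: "\<And>n i. (\<lambda>\<omega>. w n \<omega> i) \<in> borel_measurable (M n)"
    and meas_vb: "\<And>n i. (\<lambda>\<omega>. vb n \<omega> i) \<in> borel_measurable (M n)"
    and p: "filterlim p at_top sequentially"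
    and small: "smallo_P M (\<lambda>n \<omega>. sign_residual (p n) n (v n \<omega>) (vb n \<omega>) (w n \<omega>))
                  (\<lambda>n \<omega>. real n powr (1 / p n) * Min ((\<lambda>i. \<bar>vb n \<omega> i\<bar>) ` {..<n})) p"
    and \<epsilon>: "\<epsilon> > 0"
    and noise: "eventually (\<lambda>n. 1 / real n * (\<Sum>i<n. measure (M n)
                  {\<omega> \<in> space (M n). - w n \<omega> i * sgn (vb n \<omega> i) \<ge> (1 - \<epsilon>) * \<bar>vb n \<omega> i\<bar>})
                  < exp (z * p n)) sequentially"
  shows "eventually (\<lambda>n. 1 / real n * (\<integral>\<omega>. real (min_sign_mismatch n (v n \<omega>) (vb n \<omega>)) \<partial>M n)
           \<le> 3 * exp (z * p n)) sequentially"
proof -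
  note [measurable] = meas_v meas_w meas_vb
  have "eventually (\<lambda>n. measure (M n) {\<omega> \<in> space (M n).
      \<bar>sign_residual (p n) n (v n \<omega>) (vb n \<omega>) (w n \<omega>)\<bar>
      \<ge> \<epsilon> * exp z * \<bar>real n powr (1 / p n) * Min ((\<lambda>i. \<bar>vb n \<omega> i\<bar>) ` {..<n})\<bar>} \<le> exp (z * p n))
      sequentially"
    by (rule smallo_P_eventually_measure_le_exp[OF prob _ _ p small]) (measurable, measurable, simp add: \<epsilon>)
  moreover have "eventually (\<lambda>n. p n > 0 \<and> n \<ge> 1) sequentially"
    using p by (simp add: filterlim_at_top_dense eventually_conj eventually_ge_at_top)
  ultimately show ?thesis
    using noise
  proof eventually_elim
    case (elim n)
    let ?P = "\<lambda>i. measure (M n)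
      {\<omega> \<in> space (M n). - w n \<omega> i * sgn (vb n \<omega> i) \<ge> (1 - \<epsilon>) * \<bar>vb n \<omega> i\<bar>}"
    from elim(2) have pn: "p n > 0" and n: "n \<ge> 1"
      by auto
    have \<eta>: "\<epsilon> * exp z \<ge> 0"
      using \<epsilon> by simp
    have powr_eq: "(\<epsilon> * exp z / \<epsilon>) powr p n = exp (z * p n)"
      using \<epsilon> by (simp add: powr_def)
    have "(\<Sum>i<n. ?P i) < real n * exp (z * p n)"
      using elim(3) n by (simp add: field_simps)
    then have "(\<integral>\<omega>. real (min_sign_mismatch n (v n \<omega>) (vb n \<omega>)) \<partial>M n) \<le> 3 * (real n * exp (z * p n))"
      using expectation_min_sign_mismatch_le[where v = "v n" and w = "w n" and vb = "vb n" and n = n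
          and \<eta> = "\<epsilon> * exp z", OF prob meas_v[of n] meas_w[of n] meas_vb[of n] pn \<epsilon> \<eta>]
        mult_left_mono[OF elim(1) of_nat_0_le_iff[of n]]
      unfolding powr_eq by linarith
    then show ?case
      using n by (simp add: field_simps)
  qed
qed

theorem lemmaE1:
  fixes M :: "nat \<Rightarrow> 'a measure"
    and v w vb :: "nat \<Rightarrow> 'a \<Rightarrow> nat \<Rightarrow> real"
    and p :: "nat \<Rightarrow> real"
  assumes prob: "\<And>n. prob_space (M n)"
    and meas_v: "\<And>n i. (\<lambda>\<omega>. v n \<omega> i) \<in> borel_measurable (M n)"
    and meas_w: "\<And>n i. (\<lambda>\<omega>. w n \<omega> i) \<in> borel_measurable (M n)"
    and meas_vb: "\<And>n i. (\<lambda>\<omega>. vb n \<omega> i) \<in> borel_measurable (M n)"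
    and delta_pos: "\<And>n \<omega>. n \<ge> 1 \<Longrightarrow> \<omega> \<in> space (M n) \<Longrightarrow>
                       Min ((\<lambda>i. \<bar>vb n \<omega> i\<bar>) ` {..<n}) > 0"
    and p_lim: "filterlim p at_top sequentially"
    and hyp: "smallo_P M
       (\<lambda>n \<omega>. min (lp_norm (p n) n (\<lambda>i. v n \<omega> i - vb n \<omega> i - w n \<omega> i))
                   (lp_norm (p n) n (\<lambda>i. - v n \<omega> i - vb n \<omega> i - w n \<omega> i)))
       (\<lambda>n \<omega>. real n powr (1 / p n) * Min ((\<lambda>i. \<bar>vb n \<omega> i\<bar>) ` {..<n}))
       p"
  shows "limsup (\<lambda>n. ereal (1 / p n) *
            eln ((1 / real n) * (\<integral>\<omega>. real (min (sign_mismatch n 1 (v n \<omega>) (vb n \<omega>))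
                                              (sign_mismatch n (-1) (v n \<omega>) (vb n \<omega>))) \<partial>M n)))
         \<le> Limsup (at_right (0::real)) (\<lambda>\<epsilon>. limsup (\<lambda>n. ereal (1 / p n) *
            eln ((1 / real n) * (\<Sum>i<n. measure (M n)
               {\<omega> \<in> space (M n). - w n \<omega> i * sgn (vb n \<omega> i) \<ge> (1 - \<epsilon>) * \<bar>vb n \<omega> i\<bar>}))))"
proof -
  define a where "a n = 1 / real n * (\<integral>\<omega>. real (min_sign_mismatch n (v n \<omega>) (vb n \<omega>)) \<partial>M n)" for n
  define b where "b \<epsilon> n = 1 / real n * (\<Sum>i<n. measure (M n)
      {\<omega> \<in> space (M n). - w n \<omega> i * sgn (vb n \<omega> i) \<ge> (1 - \<epsilon>) * \<bar>vb n \<omega> i\<bar>})" for \<epsilon> n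
  have rate: "exp_rate p a \<le> exp_rate p (b \<epsilon>)" if "\<epsilon> > 0" for \<epsilon>
  proof (rule exp_rate_le[OF p_lim, where K = 3])
    fix z assume "exp_rate p (b \<epsilon>) < ereal z"
    then have "eventually (\<lambda>n. b \<epsilon> n < exp (z * p n)) sequentially"
      by (rule eventually_less_exp_of_exp_rate_less[OF p_lim])
    then show "eventually (\<lambda>n. a n \<le> 3 * exp (z * p n)) sequentially"
      unfolding a_def b_def
      by (rule eventually_mean_min_sign_mismatch_le_exp[OF prob meas_v meas_w meas_vb p_lim
            hyp[folded sign_residual_def] that])
  qed simp
  have "exp_rate p a \<le> Limsup (at_right 0) (\<lambda>\<epsilon>. exp_rate p (b \<epsilon>))"
    using rate by (intro le_Limsup eventually_mono[OF eventually_at_right_less]) simp_all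
  then show ?thesis
    unfolding exp_rate_def a_def b_def min_sign_mismatch_def .
qed

end
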